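(* Let $n\ge2$, $A\in\mathbb{R}^{n\times n}$ symmetric positive definite with largest and smallest eigenvalues $\lambda_1,\lambda_n$, $\rho=\lambda_1-\lambda_n$, and $f(\mathbf{z})=\frac12\mathbf{z}^TA\mathbf{z}+\frac{\beta}{2}\sum_kz_k^4$ with $\beta>\frac{18n^3}{n-1}\rho$. Then every local minimizer $\mathbf{y}$ of $f$ on $\mathbb{S}^{n-1}$ satisfies $f(\mathbf{y})-\min_{\mathbf{z}\in\mathbb{S}^{n-1}}f(\mathbf{z})\le\frac{1}{18n}\min_{\mathbf{z}\in\mathbb{S}^{n-1}}f(\mathbf{z})$.
   Context: $\mathbb{S}^{n-1}$ is the unit sphere in $\mathbb{R}^n$. *)

theory Defs
  imports "HOL-Analysis.Analysis"
begin

definition sym_posdef :: "real^'n^'n \<Rightarrow> bool" where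
  "sym_posdef A \<longleftrightarrow> transpose A = A \<and> (\<forall>x. x \<noteq> 0 \<longrightarrow> x \<bullet> (A *v x) > 0)"

definition eigenvalues_of :: "real^'n^'n \<Rightarrow> real set" where
  "eigenvalues_of A = {c. \<exists>v. v \<noteq> 0 \<and> A *v v = c *\<^sub>R v}"

definition lambda_max :: "real^'n^'n \<Rightarrow> real" where
  "lambda_max A = Max (eigenvalues_of A)"

definition lambda_min :: "real^'n^'n \<Rightarrow> real" where
  "lambda_min A = Min (eigenvalues_of A)"

definition quartic_obj :: "real^'n^'n \<Rightarrow> real \<Rightarrow> real^'n \<Rightarrow> real" where
  "quartic_obj A \<beta> z = (1/2) * (z \<bullet> (A *v z)) + (\<beta>/2) * (\<Sum>k\<in>UNIV. (z $ k) ^ 4)"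

definition local_min_on :: "('a::metric_space \<Rightarrow> real) \<Rightarrow> 'a set \<Rightarrow> 'a \<Rightarrow> bool" where
  "local_min_on f S y \<longleftrightarrow> y \<in> S \<and> (\<exists>\<epsilon>>0. \<forall>z\<in>S. dist z y < \<epsilon> \<longrightarrow> f y \<le> f z)"

end

theory Submission
  imports Defs
begin

text \<open>
  Let \<open>m\<close> and \<open>M\<close> be the extreme values of the Rayleigh quotient of \<open>A\<close>; they are eigenvalues,
  so \<open>M - m \<le> \<rho>\<close>. At a local minimiser \<open>y\<close> the quartic polynomial
  \<open>t \<mapsto> |y + t v|\<^sup>4 (f((y + t v) / |y + t v|) - f(y))\<close> is nonnegative near \<open>0\<close> and vanishes at \<open>0\<close>.
  For tangent directions \<open>v\<close> its linear coefficient gives the Lagrange equation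
  \<open>A y + 2 \<beta> y\<^sup>3 = \<lambda> y\<close> with \<open>\<lambda> = y\<^sup>T A y + 2 \<beta> \<Sum> y\<^sub>k\<^sup>4\<close>, and its quadratic coefficient,
  tested on the rotation in the \<open>(i, j)\<close> coordinate plane, gives
  \<open>(\<lambda> - M) (y\<^sub>i\<^sup>2 + y\<^sub>j\<^sup>2) \<le> 12 \<beta> y\<^sub>i\<^sup>2 y\<^sub>j\<^sup>2\<close>. As \<open>\<lambda> \<ge> m + 2 \<beta> / n\<close> and \<open>\<beta>\<close> is large
  compared to \<open>M - m\<close>, this forces \<open>y\<^sub>k\<^sup>2 \<ge> 1 / (8 n)\<close> for every \<open>k\<close>.
  By the Lagrange equation, \<open>|(A - m) y|\<^sup>2 = \<Sum> y\<^sub>k\<^sup>2 (\<lambda> - m - 2 \<beta> y\<^sub>k\<^sup>2)\<^sup>2 \<le> (M - m)\<^sup>2\<close>,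
  so all \<open>y\<^sub>k\<^sup>2\<close> are close to a common value and \<open>\<Sum> y\<^sub>k\<^sup>4\<close> exceeds its minimum \<open>1 / n\<close>
  by at most \<open>2 n (M - m)\<^sup>2 / \<beta>\<^sup>2\<close>. Hence \<open>f(y) \<le> m / 2 + \<beta> / (2 n) + \<beta> / (36 n\<^sup>2)\<close>,
  whereas \<open>f \<ge> m / 2 + \<beta> / (2 n)\<close> on the whole sphere.
\<close>

lemma nonneg_quartic_near_zero_coeffs:
  fixes c1 c2 c3 c4 :: real
  assumes ev: "eventually (\<lambda>t. 0 \<le> c1*t + c2*t^2 + c3*t^3 + c4*t^4) (at 0)"
  shows "c1 = 0" and "0 \<le> c2"
proof -
  have factor: "c1*t + c2*t^2 + c3*t^3 + c4*t^4 = t * (c1 + c2*t + c3*t^2 + c4*t^3)" for t :: real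
    by (simp add: algebra_simps power2_eq_square power3_eq_cube power4_eq_xxxx)
  have lim1: "((\<lambda>t. c1 + c2*t + c3*t^2 + c4*t^3) \<longlongrightarrow> c1) (at (0::real) within S)" for S
    by (rule tendsto_eq_intros refl tendsto_ident_at)+ simp
  have lim2: "((\<lambda>t. c2 + c3*t + c4*t^2) \<longlongrightarrow> c2) (at (0::real) within S)" for S
    by (rule tendsto_eq_intros refl tendsto_ident_at)+ simp
  have eventually_at_left_neg: "eventually (\<lambda>t::real. t < 0) (at_left 0)"
    by (simp add: eventually_at_filter)
  from ev have evr: "eventually (\<lambda>t. 0 \<le> c1*t + c2*t^2 + c3*t^3 + c4*t^4) (at_right 0)"
    and evl: "eventually (\<lambda>t. 0 \<le> c1*t + c2*t^2 + c3*t^3 + c4*t^4) (at_left 0)"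
    using eventually_at_split by auto
  have "eventually (\<lambda>t. 0 \<le> c1 + c2*t + c3*t^2 + c4*t^3) (at_right 0)"
    using evr eventually_at_right_less
    by eventually_elim (simp add: factor zero_le_mult_iff)
  then have "0 \<le> c1" by (rule tendsto_lowerbound[OF lim1 _ trivial_limit_at_right_real])
  moreover have "eventually (\<lambda>t. c1 + c2*t + c3*t^2 + c4*t^3 \<le> 0) (at_left 0)"
    using evl eventually_at_left_neg
    by eventually_elim (simp add: factor zero_le_mult_iff)
  then have "c1 \<le> 0" by (rule tendsto_upperbound[OF lim1 _ trivial_limit_at_left_real])
  ultimately show c1: "c1 = 0" by simp
  have "eventually (\<lambda>t. 0 \<le> c2 + c3*t + c4*t^2) (at_right 0)"
    using evr eventually_at_right_less
  proof eventually_elim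
    case (elim t)
    have "c1*t + c2*t^2 + c3*t^3 + c4*t^4 = t^2 * (c2 + c3*t + c4*t^2)"
      using c1 by (simp add: algebra_simps power2_eq_square power3_eq_cube power4_eq_xxxx)
    with elim show ?case by (simp add: zero_le_mult_iff)
  qed
  then show "0 \<le> c2" by (rule tendsto_lowerbound[OF lim2 _ trivial_limit_at_right_real])
qed

lemma nonneg_quadratic_discriminant:
  fixes a b c :: real
  assumes nonneg: "\<And>t. 0 \<le> a + 2*b*t + c*t^2" and "0 \<le> c"
  shows "b^2 \<le> a*c"
proof (cases "c = 0")
  case True
  show ?thesis
  proof (rule ccontr)
    assume "\<not> ?thesis"
    then have "b \<noteq> 0" using True by simp
    have "0 \<le> a + 2*b*(-(a+1)/(2*b))" using nonneg[of "-(a+1)/(2*b)"] True by simp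
    also have "\<dots> = -1" using \<open>b \<noteq> 0\<close> by (simp add: field_simps)
    finally show False by simp
  qed
next
  case False
  then have c: "c > 0" using assms by simp
  have "0 \<le> a + 2*b*(-b/c) + c*(-b/c)^2" by (rule nonneg)
  also have "\<dots> = (a*c - b^2)/c" using c by (simp add: field_simps power2_eq_square)
  finally show ?thesis using c by (simp add: zero_le_divide_iff)
qed

lemma sum_eq_two_support:
  fixes f :: "'n::finite \<Rightarrow> 'a::comm_monoid_add"
  assumes "i \<noteq> j" and "\<And>k. k \<noteq> i \<Longrightarrow> k \<noteq> j \<Longrightarrow> f k = 0"
  shows "sum f UNIV = f i + f j"
proof -
  have "sum f UNIV = sum f {i, j}" by (rule sum.mono_neutral_right) (use assms in auto)
  then show ?thesis using assms(1) by simp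
qed

lemma sum_sq_deviation_ge:
  fixes a :: "'n::finite \<Rightarrow> real"
  assumes "sum a UNIV = 1"
  shows "b^2 * ((\<Sum>k\<in>UNIV. (a k)^2) - 1 / CARD('n)) \<le> (\<Sum>k\<in>UNIV. (b * a k - \<mu>)^2)"
proof -
  define n where "n = real CARD('n)"
  have n: "n > 0" unfolding n_def by simp
  have "(\<Sum>k\<in>UNIV. (b * a k - \<mu>)^2) = (\<Sum>k\<in>UNIV. b^2 * (a k)^2 - 2 * b * \<mu> * a k + \<mu>^2)"
    by (rule sum.cong) (simp_all add: power2_eq_square algebra_simps)
  also have "\<dots> = b^2 * (\<Sum>k\<in>UNIV. (a k)^2) - 2 * b * \<mu> * sum a UNIV + n * \<mu>^2"
    unfolding n_def by (simp add: sum.distrib sum_subtractf sum_distrib_left)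
  also have "\<dots> = b^2 * ((\<Sum>k\<in>UNIV. (a k)^2) - 1 / n) + n * (\<mu> - b / n)^2"
    using assms n by (simp add: field_simps power2_eq_square)
  finally show ?thesis using n unfolding n_def by simp
qed

lemma weighted_sq_deviation_ge:
  fixes a :: "'n::finite \<Rightarrow> real"
  assumes "sum a UNIV = 1" and "0 \<le> l" and "\<And>k. l \<le> a k"
  shows "l * b^2 * ((\<Sum>k\<in>UNIV. (a k)^2) - 1 / CARD('n)) \<le> (\<Sum>k\<in>UNIV. a k * (b * a k - \<mu>)^2)"
proof -
  have "l * b^2 * ((\<Sum>k\<in>UNIV. (a k)^2) - 1 / CARD('n)) \<le> l * (\<Sum>k\<in>UNIV. (b * a k - \<mu>)^2)"
    unfolding mult.assoc using sum_sq_deviation_ge[OF assms(1)] \<open>0 \<le> l\<close> by (rule mult_left_mono)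
  also have "\<dots> \<le> (\<Sum>k\<in>UNIV. a k * (b * a k - \<mu>)^2)"
    unfolding sum_distrib_left by (intro sum_mono mult_right_mono assms(3)) simp
  finally show ?thesis .
qed

lemma lower_bound_from_pair_condition:
  fixes a :: "'n::finite \<Rightarrow> real"
  assumes nonneg: "\<And>k. 0 \<le> a k" and sum1: "sum a UNIV = 1"
    and "0 \<le> K" and K: "K \<le> c / CARD('n)"
    and pair: "\<And>i j. i \<noteq> j \<Longrightarrow> K * (a i + a j) \<le> c * a i * a j"
  shows "K \<le> c * a k"
proof -
  obtain j where aj: "1 / CARD('n) \<le> a j"
  proof (rule ccontr)
    assume "\<not> thesis"
    with that have small: "a k < 1 / CARD('n)" for k by (meson not_le)
    have "sum a UNIV < (\<Sum>k\<in>(UNIV::'n set). 1 / CARD('n))"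
      by (rule sum_strict_mono) (simp_all add: small)
    with sum1 show False by simp
  qed
  have "0 \<le> c / CARD('n)" using \<open>0 \<le> K\<close> K by linarith
  then have "0 \<le> c" by (simp add: zero_le_divide_iff)
  show ?thesis
  proof (cases "k = j")
    case True
    have "K \<le> c * (1 / CARD('n))" using K by simp
    also have "\<dots> \<le> c * a k" using mult_left_mono[OF aj \<open>0 \<le> c\<close>] True by simp
    finally show ?thesis .
  next
    case False
    have "0 < a j" using aj by (rule less_le_trans[rotated]) simp
    have "K * a j \<le> K * (a k + a j)" using \<open>0 \<le> K\<close> nonneg by (simp add: mult_left_mono)
    also have "\<dots> \<le> (c * a k) * a j" using pair[OF False] by simp
    finally show ?thesis using \<open>0 < a j\<close> by simp
  qed
qed

lemma inverse_card_le_sum_power4: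
  fixes z :: "real^'n"
  assumes "z \<bullet> z = 1"
  shows "1 / CARD('n) \<le> (\<Sum>k\<in>UNIV. (z$k)^4)"
proof -
  have "(\<Sum>k\<in>UNIV. (z$k)^2) = 1" using assms by (simp add: inner_vec_def power2_eq_square)
  then have "1 \<le> (\<Sum>k\<in>UNIV. ((z$k)^2)^2) * CARD('n)"
    using sum_squared_le_sum_of_squares[of "\<lambda>k. (z$k)^2" UNIV] by simp
  then show ?thesis by (simp add: field_simps flip: power_mult)
qed

lemma beta_bound_imp_spread_condition:
  fixes n r \<rho> \<beta> :: real
  assumes "2 \<le> n" and "0 \<le> r" and "r \<le> \<rho>" and "18 * n^3 / (n - 1) * \<rho> < \<beta>"
  shows "0 < \<beta>" and "18 * n^3 * r \<le> \<beta> * (n - 1)"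
proof -
  have X: "0 \<le> 18 * n^3 / (n - 1)" using assms(1) by simp
  then have "18 * n^3 / (n - 1) * r < \<beta>"
    using mult_left_mono[OF assms(3) X] assms(4) by linarith
  moreover have "0 \<le> 18 * n^3 / (n - 1) * r" using X assms(2) by (rule mult_nonneg_nonneg)
  ultimately show "0 < \<beta>" by linarith
  show "18 * n^3 * r \<le> \<beta> * (n - 1)"
    using \<open>18 * n^3 / (n - 1) * r < \<beta>\<close> assms(1) by (simp add: field_simps)
qed

lemma spread_condition_consequences:
  fixes n r \<beta> :: real
  assumes "1 \<le> n" and "0 \<le> r" and "0 < \<beta>" and spread: "18 * n^3 * r \<le> \<beta> * (n - 1)"
  shows "2 * n * r \<le> \<beta>" and "r / 2 + n * r^2 / \<beta> \<le> \<beta> / (36 * n^2)"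
proof -
  have r_le: "r \<le> \<beta> * (n - 1) / (18 * n^3)" using spread \<open>1 \<le> n\<close> by (simp add: field_simps)
  have "18 * n^3 * r \<le> \<beta> * n" using spread \<open>0 < \<beta>\<close> by (simp add: right_diff_distrib)
  then have "18 * n^2 * r \<le> \<beta>" using \<open>1 \<le> n\<close> by (simp add: power2_eq_square power3_eq_cube)
  moreover have "2 * n * r \<le> 18 * n^2 * r"
    using \<open>1 \<le> n\<close> \<open>0 \<le> r\<close> by (intro mult_right_mono) (simp_all add: power2_eq_square)
  ultimately show "2 * n * r \<le> \<beta>" by linarith
  from \<open>18 * n^2 * r \<le> \<beta>\<close> have "18 * n^2 * r * r \<le> \<beta> * r" using \<open>0 \<le> r\<close> by (rule mult_right_mono)
  have "n * r^2 / \<beta> = (18 * n^2 * r * r) / (18 * n * \<beta>)"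
    using assms by (simp add: field_simps power2_eq_square)
  also have "\<dots> \<le> (\<beta> * r) / (18 * n * \<beta>)"
    using \<open>18 * n^2 * r * r \<le> \<beta> * r\<close> assms by (intro divide_right_mono) simp_all
  also have "\<dots> = r / (18 * n)" using assms by simp
  finally have "r / 2 + n * r^2 / \<beta> \<le> r / 2 + r / (18 * n)" by simp
  also have "\<dots> = r * ((9 * n + 1) / (18 * n))" using \<open>1 \<le> n\<close> by (simp add: field_simps)
  also have "\<dots> \<le> \<beta> * (n - 1) / (18 * n^3) * ((9 * n + 1) / (18 * n))"
    using r_le \<open>1 \<le> n\<close> by (intro mult_right_mono) simp_all
  also have "\<dots> = \<beta> * ((n - 1) * (9 * n + 1)) / (324 * n^4)"
    by (simp add: field_simps power2_eq_square power3_eq_cube power4_eq_xxxx)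
  also have "\<dots> \<le> \<beta> * (9 * n^2) / (324 * n^4)"
    using \<open>1 \<le> n\<close> \<open>0 < \<beta>\<close> by (intro divide_right_mono mult_left_mono) (simp_all add: algebra_simps power2_eq_square)
  also have "\<dots> = \<beta> / (36 * n^2)"
    using \<open>1 \<le> n\<close> by (simp add: field_simps power2_eq_square power4_eq_xxxx)
  finally show "r / 2 + n * r^2 / \<beta> \<le> \<beta> / (36 * n^2)" .
qed

section \<open>Quadratic forms of symmetric matrices\<close>

lemma symmetric_matrix_inner:
  fixes A :: "real^'n^'n"
  assumes "transpose A = A"
  shows "x \<bullet> (A *v y) = (A *v x) \<bullet> y"
  by (metis assms dot_lmul_matrix transpose_matrix_vector)

lemma quadratic_form_add_scaleR:
  fixes A :: "real^'n^'n"
  shows "(x + t *\<^sub>R u) \<bullet> (A *v (x + t *\<^sub>R u)) =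
     x \<bullet> (A *v x) + t * (x \<bullet> (A *v u) + u \<bullet> (A *v x)) + t^2 * (u \<bullet> (A *v u))"
  by (simp add: algebra_simps power2_eq_square)

lemma inner_add_scaleR_self:
  fixes x u :: "'a::real_inner"
  shows "(x + t *\<^sub>R u) \<bullet> (x + t *\<^sub>R u) = x \<bullet> x + t * (2 * (x \<bullet> u)) + t^2 * (u \<bullet> u)"
  by (simp add: inner_commute algebra_simps power2_eq_square)

lemma quadratic_form_scaleR:
  fixes A :: "real^'n^'n"
  shows "(c *\<^sub>R z) \<bullet> (A *v (c *\<^sub>R z)) = c^2 * (z \<bullet> (A *v z))"
  by (simp add: matrix_vector_mult_scaleR power2_eq_square)

lemma quadratic_form_sgn:
  fixes A :: "real^'n^'n"
  shows "w \<bullet> (A *v w) = (w \<bullet> w) * (sgn w \<bullet> (A *v sgn w))"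
proof (cases "w = 0")
  case False
  then have "w = norm w *\<^sub>R sgn w" by (simp add: sgn_div_norm)
  then show ?thesis by (metis dot_square_norm quadratic_form_scaleR)
qed simp

lemma eigenvector_if_quadratic_form_extremal:
  fixes A :: "real^'n^'n"
  assumes sym: "transpose A = A"
    and extremal: "\<And>w. 0 \<le> s * (w \<bullet> (A *v w) - \<mu> * (w \<bullet> w))" and "s \<noteq> 0"
    and attained: "x \<bullet> (A *v x) = \<mu> * (x \<bullet> x)"
  shows "A *v x = \<mu> *\<^sub>R x"
proof -
  obtain u where u: "u = A *v x - \<mu> *\<^sub>R x" by blast
  have uu: "u \<bullet> u = (A *v x) \<bullet> u - \<mu> * (x \<bullet> u)"
    using u by (metis inner_diff_left inner_scaleR_left)
  have "x \<bullet> (A *v u) = (A *v x) \<bullet> u" by (rule symmetric_matrix_inner[OF sym])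
  then have expand: "s * ((x + t *\<^sub>R u) \<bullet> (A *v (x + t *\<^sub>R u)) - \<mu> * ((x + t *\<^sub>R u) \<bullet> (x + t *\<^sub>R u)))
      = (2 * s * (u \<bullet> u)) * t + (s * (u \<bullet> (A *v u) - \<mu> * (u \<bullet> u))) * t^2 + 0 * t^3 + 0 * t^4" for t
    unfolding quadratic_form_add_scaleR inner_add_scaleR_self uu
    using attained by (simp add: inner_commute algebra_simps)
  have "0 \<le> (2 * s * (u \<bullet> u)) * t + (s * (u \<bullet> (A *v u) - \<mu> * (u \<bullet> u))) * t^2 + 0 * t^3 + 0 * t^4" for t
    using extremal[of "x + t *\<^sub>R u"] unfolding expand .
  then have "eventually (\<lambda>t. 0 \<le> (2 * s * (u \<bullet> u)) * t
      + (s * (u \<bullet> (A *v u) - \<mu> * (u \<bullet> u))) * t^2 + 0 * t^3 + 0 * t^4) (at 0)"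
    by (rule always_eventually[OF allI])
  then have "2 * s * (u \<bullet> u) = 0" by (rule nonneg_quartic_near_zero_coeffs)
  with \<open>s \<noteq> 0\<close> u show ?thesis by simp
qed

lemma finite_eigenvalues_of_symmetric:
  fixes A :: "real^'n^'n"
  assumes sym: "transpose A = A"
  shows "finite (eigenvalues_of A)"
proof -
  define E where "E = eigenvalues_of A"
  have "\<forall>c\<in>E. \<exists>v. v \<noteq> 0 \<and> A *v v = c *\<^sub>R v" by (simp add: E_def eigenvalues_of_def)
  then obtain ev where ev: "\<And>c. c \<in> E \<Longrightarrow> ev c \<noteq> 0 \<and> A *v ev c = c *\<^sub>R ev c"
    by metis
  have inj: "inj_on ev E"
  proof (rule inj_onI)
    fix c d assume c: "c \<in> E" and d: "d \<in> E" and "ev c = ev d"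
    then have "c *\<^sub>R ev c = d *\<^sub>R ev c" using ev by metis
    then show "c = d" using ev[OF c] by simp
  qed
  have "pairwise orthogonal (ev ` E)"
  proof (clarsimp simp: pairwise_def)
    fix c d assume c: "c \<in> E" and d: "d \<in> E" and "ev c \<noteq> ev d"
    then have "c \<noteq> d" by auto
    have "c * (ev c \<bullet> ev d) = (A *v ev c) \<bullet> ev d" using ev[OF c] by simp
    also have "\<dots> = ev c \<bullet> (A *v ev d)" using symmetric_matrix_inner[OF sym] by simp
    also have "\<dots> = d * (ev c \<bullet> ev d)" using ev[OF d] by simp
    finally show "orthogonal (ev c) (ev d)" using \<open>c \<noteq> d\<close> by (simp add: orthogonal_def)
  qed
  moreover have "0 \<notin> ev ` E" using ev by auto
  ultimately have "finite (ev ` E)"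
    by (intro finiteI_independent pairwise_orthogonal_independent)
  then show ?thesis using finite_imageD[OF _ inj] unfolding E_def by blast
qed

lemma symmetric_quadratic_form_eigenvalue_bounds:
  fixes A :: "real^'n^'n"
  assumes sym: "transpose A = A"
  obtains m M where "m \<in> eigenvalues_of A" and "M \<in> eigenvalues_of A"
    and "\<And>w. m * (w \<bullet> w) \<le> w \<bullet> (A *v w)" and "\<And>w. w \<bullet> (A *v w) \<le> M * (w \<bullet> w)"
proof -
  let ?q = "\<lambda>x::real^'n. x \<bullet> (A *v x)"
  have cont: "continuous_on (sphere 0 1) ?q"
    by (intro continuous_intros linear_continuous_on matrix_vector_mul_linear)
  have ne: "sphere (0::real^'n) 1 \<noteq> {}"
    using norm_axis_1 by (metis mem_sphere_0 empty_iff)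
  obtain x where x: "x \<in> sphere 0 1" and xmin: "\<And>z. z \<in> sphere 0 1 \<Longrightarrow> ?q x \<le> ?q z"
    using continuous_attains_inf[OF compact_sphere ne cont] by blast
  obtain y where y: "y \<in> sphere 0 1" and ymax: "\<And>z. z \<in> sphere 0 1 \<Longrightarrow> ?q z \<le> ?q y"
    using continuous_attains_sup[OF compact_sphere ne cont] by blast
  have sgn_sphere: "w \<noteq> 0 \<Longrightarrow> sgn w \<in> sphere 0 1" for w :: "real^'n"
    by (simp add: norm_sgn)
  have lo: "?q x * (w \<bullet> w) \<le> ?q w" for w
    using xmin[OF sgn_sphere, of w] by (cases "w = 0") (simp_all add: quadratic_form_sgn[of w] mult.commute)
  have hi: "?q w \<le> ?q y * (w \<bullet> w)" for w
    using ymax[OF sgn_sphere, of w] by (cases "w = 0") (simp_all add: quadratic_form_sgn[of w] mult.commute)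
  have "x \<bullet> x = 1" "y \<bullet> y = 1" using x y by (simp_all add: dot_square_norm)
  have "A *v x = ?q x *\<^sub>R x"
    by (rule eigenvector_if_quadratic_form_extremal[OF sym, where s = 1])
      (use lo \<open>x \<bullet> x = 1\<close> in auto)
  moreover have "A *v y = ?q y *\<^sub>R y"
    by (rule eigenvector_if_quadratic_form_extremal[OF sym, where s = "-1"])
      (use hi \<open>y \<bullet> y = 1\<close> in auto)
  moreover have "x \<noteq> 0" "y \<noteq> 0" using x y by auto
  ultimately show ?thesis using that lo hi unfolding eigenvalues_of_def by blast
qed

lemma sym_posdef_eigenvalue_pos:
  fixes A :: "real^'n^'n"
  assumes "sym_posdef A" and "c \<in> eigenvalues_of A"
  shows "0 < c"
proof -
  obtain v where "v \<noteq> 0" and "A *v v = c *\<^sub>R v" using assms(2) by (auto simp: eigenvalues_of_def)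
  have "0 < v \<bullet> (A *v v)" using assms(1) \<open>v \<noteq> 0\<close> by (simp add: sym_posdef_def)
  also have "\<dots> = c * (v \<bullet> v)" by (simp add: \<open>A *v v = c *\<^sub>R v\<close>)
  finally show ?thesis using inner_ge_zero[of v] by (simp add: zero_less_mult_iff)
qed

lemma residual_le_quadratic_form_spread:
  fixes A :: "real^'n^'n"
  assumes sym: "transpose A = A"
    and lo: "\<And>w. m * (w \<bullet> w) \<le> w \<bullet> (A *v w)" and hi: "\<And>w. w \<bullet> (A *v w) \<le> M * (w \<bullet> w)"
  shows "(A *v x - m *\<^sub>R x) \<bullet> (A *v x - m *\<^sub>R x) \<le> (M - m)^2 * (x \<bullet> x)"
proof -
  define b where "b = (\<lambda>x z. x \<bullet> (A *v z) - m * (x \<bullet> z))"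
  define u where "u = A *v x - m *\<^sub>R x"
  have b0: "0 \<le> b w w" for w using lo[of w] by (simp add: b_def)
  have b1: "b w w \<le> (M - m) * (w \<bullet> w)" for w using hi[of w] by (simp add: b_def algebra_simps)
  have bxu: "b x u = u \<bullet> u" unfolding b_def u_def using symmetric_matrix_inner[OF sym, of x]
    by (simp add: algebra_simps)
  \<comment> \<open>Cauchy--Schwarz for the positive semidefinite form \<open>b\<close>\<close>
  have "(b x u)^2 \<le> b x x * b u u"
  proof (rule nonneg_quadratic_discriminant)
    fix t :: real
    have "0 \<le> b (x + t *\<^sub>R u) (x + t *\<^sub>R u)" by (rule b0)
    also have "\<dots> = b x x + 2 * b x u * t + b u u * t^2"
      unfolding b_def quadratic_form_add_scaleR inner_add_scaleR_self using symmetric_matrix_inner[OF sym, of u x]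
      by (simp add: algebra_simps inner_commute)
    finally show "0 \<le> b x x + 2 * b x u * t + b u u * t^2" .
  qed (rule b0)
  also have "\<dots> \<le> ((M - m) * (x \<bullet> x)) * ((M - m) * (u \<bullet> u))"
    by (rule mult_mono[OF b1 b1]) (use b0 order_trans[OF b0 b1] in auto)
  finally have "(u \<bullet> u)^2 \<le> (M - m)^2 * (x \<bullet> x) * (u \<bullet> u)"
    using bxu by (simp add: power2_eq_square algebra_simps)
  then show ?thesis unfolding u_def[symmetric]
    by (cases "u \<bullet> u = 0") (auto simp: power2_eq_square)
qed

section \<open>Optimality conditions on the sphere\<close>

lemma sum_power4_add_scaleR:
  fixes y v :: "real^'n"
  shows "(\<Sum>k\<in>UNIV. ((y + t *\<^sub>R v) $ k)^4) = (\<Sum>k\<in>UNIV. (y$k)^4)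
     + t * (4 * (\<Sum>k\<in>UNIV. (y$k)^3 * v$k)) + t^2 * (6 * (\<Sum>k\<in>UNIV. (y$k)^2 * (v$k)^2))
     + t^3 * (4 * (\<Sum>k\<in>UNIV. y$k * (v$k)^3)) + t^4 * (\<Sum>k\<in>UNIV. (v$k)^4)"
proof -
  have "(\<Sum>k\<in>UNIV. ((y + t *\<^sub>R v) $ k)^4) = (\<Sum>k\<in>UNIV. (y$k)^4
     + t * (4 * ((y$k)^3 * v$k)) + t^2 * (6 * ((y$k)^2 * (v$k)^2))
     + t^3 * (4 * (y$k * (v$k)^3)) + t^4 * (v$k)^4)"
    by (rule sum.cong) (simp_all add: algebra_simps power2_eq_square power3_eq_cube power4_eq_xxxx)
  then show ?thesis by (simp add: sum.distrib sum_distrib_left)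
qed

definition quartic_form :: "real^'n^'n \<Rightarrow> real \<Rightarrow> real^'n \<Rightarrow> real" where
  "quartic_form A \<beta> w = (w \<bullet> (A *v w)) * (w \<bullet> w) / 2 + \<beta> / 2 * (\<Sum>k\<in>UNIV. (w $ k)^4)"

lemma quartic_form_eq_sgn:
  "quartic_form A \<beta> w = norm w ^ 4 * quartic_obj A \<beta> (sgn w)"
proof (cases "w = 0")
  case False
  define z where "z = sgn w"
  have w: "w = norm w *\<^sub>R z" using False by (simp add: z_def sgn_div_norm)
  have "z \<bullet> z = 1" using False by (simp add: z_def dot_square_norm norm_sgn)
  then show ?thesis
    unfolding quartic_form_def quartic_obj_def z_def[symmetric]
    by (subst (1 2 3 4 5) w) (simp add: quadratic_form_scaleR power_mult_distrib
        sum_distrib_left algebra_simps power2_eq_square power4_eq_xxxx)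
qed (simp add: quartic_form_def)

lemma local_min_quartic_form:
  assumes "local_min_on (quartic_obj A \<beta>) (sphere 0 1) y"
  shows "eventually (\<lambda>t. quartic_obj A \<beta> y * ((y + t *\<^sub>R v) \<bullet> (y + t *\<^sub>R v))^2
           \<le> quartic_form A \<beta> (y + t *\<^sub>R v)) (at 0)"
proof -
  obtain e where y: "y \<in> sphere 0 1" and "e > 0"
    and min: "\<And>z. z \<in> sphere 0 1 \<Longrightarrow> dist z y < e \<Longrightarrow> quartic_obj A \<beta> y \<le> quartic_obj A \<beta> z"
    using assms unfolding local_min_on_def by blast
  then have "y \<noteq> 0" and sgn_y: "sgn y = y" by (auto simp: sgn_div_norm)
  have lim: "((\<lambda>t. y + t *\<^sub>R v) \<longlongrightarrow> y) (at (0::real))"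
    by (rule tendsto_eq_intros refl tendsto_ident_at)+ simp
  have "eventually (\<lambda>t. y + t *\<^sub>R v \<noteq> 0) (at 0)"
    using tendsto_imp_eventually_ne[OF lim \<open>y \<noteq> 0\<close>] .
  moreover have "eventually (\<lambda>t. dist (sgn (y + t *\<^sub>R v)) y < e) (at 0)"
    using tendstoD[OF tendsto_sgn[OF lim \<open>y \<noteq> 0\<close>] \<open>e > 0\<close>] by (simp add: sgn_y)
  ultimately show ?thesis
  proof eventually_elim
    case (elim t)
    let ?w = "y + t *\<^sub>R v"
    have "quartic_obj A \<beta> y \<le> quartic_obj A \<beta> (sgn ?w)"
      using min elim by (simp add: norm_sgn)
    then have "norm ?w ^ 4 * quartic_obj A \<beta> y \<le> quartic_form A \<beta> ?w"
      unfolding quartic_form_eq_sgn by (simp add: mult_left_mono)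
    then show ?case by (simp add: dot_square_norm mult.commute flip: power_mult)
  qed
qed

definition quartic_multiplier :: "real^'n^'n \<Rightarrow> real \<Rightarrow> real^'n \<Rightarrow> real" where
  "quartic_multiplier A \<beta> y = y \<bullet> (A *v y) + 2 * \<beta> * (\<Sum>k\<in>UNIV. (y $ k)^4)"

lemma quartic_obj_tangent_conditions:
  fixes A :: "real^'n^'n"
  assumes lm: "local_min_on (quartic_obj A \<beta>) (sphere 0 1) y" and yv: "y \<bullet> v = 0"
  shows "y \<bullet> (A *v v) + v \<bullet> (A *v y) + 4 * \<beta> * (\<Sum>k\<in>UNIV. (y$k)^3 * v$k) = 0"
    and "quartic_multiplier A \<beta> y * (v \<bullet> v) \<le> v \<bullet> (A *v v) + 6 * \<beta> * (\<Sum>k\<in>UNIV. (y$k)^2 * (v$k)^2)"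
proof -
  have yy: "y \<bullet> y = 1" using lm by (auto simp: local_min_on_def dot_square_norm)
  define fy where "fy = quartic_obj A \<beta> y"
  define lam where "lam = quartic_multiplier A \<beta> y"
  define p where "p = y \<bullet> (A *v v) + v \<bullet> (A *v y)"
  define S where "S = (\<lambda>i. \<Sum>k\<in>UNIV. (y$k)^(4 - i) * (v$k)^i)"
  have S: "S 0 = (\<Sum>k\<in>UNIV. (y$k)^4)" "S 1 = (\<Sum>k\<in>UNIV. (y$k)^3 * v$k)"
    "S 2 = (\<Sum>k\<in>UNIV. (y$k)^2 * (v$k)^2)" "S 3 = (\<Sum>k\<in>UNIV. y$k * (v$k)^3)"
    "S 4 = (\<Sum>k\<in>UNIV. (v$k)^4)"
    by (simp_all add: S_def)
  have fy: "fy = (y \<bullet> (A *v y)) / 2 + \<beta> / 2 * S 0"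
    and lam: "lam = y \<bullet> (A *v y) + 2 * \<beta> * S 0"
    by (simp_all add: fy_def lam_def quartic_obj_def quartic_multiplier_def S)
  have expand: "quartic_form A \<beta> (y + t *\<^sub>R v) - fy * ((y + t *\<^sub>R v) \<bullet> (y + t *\<^sub>R v))^2
      = (p / 2 + 2 * \<beta> * S 1) * t
      + ((v \<bullet> (A *v v) + 6 * \<beta> * S 2 - lam * (v \<bullet> v)) / 2) * t^2
      + (p * (v \<bullet> v) / 2 + 2 * \<beta> * S 3) * t^3
      + ((v \<bullet> (A *v v)) * (v \<bullet> v) / 2 + \<beta> / 2 * S 4 - fy * (v \<bullet> v)^2) * t^4" for t
    unfolding quartic_form_def quadratic_form_add_scaleR inner_add_scaleR_self sum_power4_add_scaleR
      yy yv fy lam p_def[symmetric] S(1-5)[symmetric]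
    by (simp add: field_simps power2_eq_square power3_eq_cube power4_eq_xxxx)
  have "eventually (\<lambda>t. 0 \<le> (p / 2 + 2 * \<beta> * S 1) * t
      + ((v \<bullet> (A *v v) + 6 * \<beta> * S 2 - lam * (v \<bullet> v)) / 2) * t^2
      + (p * (v \<bullet> v) / 2 + 2 * \<beta> * S 3) * t^3
      + ((v \<bullet> (A *v v)) * (v \<bullet> v) / 2 + \<beta> / 2 * S 4 - fy * (v \<bullet> v)^2) * t^4) (at 0)"
    using local_min_quartic_form[OF lm, of v] unfolding fy_def[symmetric]
    by eventually_elim (unfold expand[symmetric], simp)
  note coeffs = nonneg_quartic_near_zero_coeffs[OF this]
  from coeffs(1) show "y \<bullet> (A *v v) + v \<bullet> (A *v y) + 4 * \<beta> * (\<Sum>k\<in>UNIV. (y$k)^3 * v$k) = 0"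
    unfolding p_def S(2) by (simp add: field_simps)
  from coeffs(2)
  show "quartic_multiplier A \<beta> y * (v \<bullet> v) \<le> v \<bullet> (A *v v) + 6 * \<beta> * (\<Sum>k\<in>UNIV. (y$k)^2 * (v$k)^2)"
    unfolding lam_def S(3) by simp
qed

lemma quartic_obj_critical_point:
  fixes A :: "real^'n^'n"
  assumes sym: "transpose A = A" and lm: "local_min_on (quartic_obj A \<beta>) (sphere 0 1) y"
  shows "A *v y + (2 * \<beta>) *\<^sub>R (\<chi> k. (y$k)^3) = quartic_multiplier A \<beta> y *\<^sub>R y"
proof -
  define c :: "real^'n" where "c = (\<chi> k. (y$k)^3)"
  define u where "u = A *v y + (2 * \<beta>) *\<^sub>R c - quartic_multiplier A \<beta> y *\<^sub>R y"
  have "y \<bullet> y = 1" using lm by (auto simp: local_min_on_def dot_square_norm)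
  moreover have "y \<bullet> c = (\<Sum>k\<in>UNIV. (y$k)^4)"
    unfolding c_def inner_vec_def by (simp add: power3_eq_cube power4_eq_xxxx mult.assoc)
  ultimately have yu: "y \<bullet> u = 0"
    by (simp add: u_def quartic_multiplier_def inner_diff_right inner_add_right)
  have "0 = y \<bullet> (A *v u) + u \<bullet> (A *v y) + 4 * \<beta> * (\<Sum>k\<in>UNIV. (y$k)^3 * u$k)"
    using quartic_obj_tangent_conditions(1)[OF lm yu] by simp
  also have "(\<Sum>k\<in>UNIV. (y$k)^3 * u$k) = c \<bullet> u" by (simp add: c_def inner_vec_def)
  also have "y \<bullet> (A *v u) + u \<bullet> (A *v y) + 4 * \<beta> * (c \<bullet> u) = 2 * ((A *v y + (2 * \<beta>) *\<^sub>R c) \<bullet> u)"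
    using symmetric_matrix_inner[OF sym, of y u] by (simp add: inner_add_right inner_commute algebra_simps)
  also have "A *v y + (2 * \<beta>) *\<^sub>R c = u + quartic_multiplier A \<beta> y *\<^sub>R y"
    by (simp add: u_def)
  also have "2 * ((u + quartic_multiplier A \<beta> y *\<^sub>R y) \<bullet> u) = 2 * (u \<bullet> u)"
    using yu by (simp add: inner_add_right inner_commute)
  finally have "u = 0" by simp
  then show ?thesis by (simp add: u_def c_def)
qed

lemma quartic_obj_pair_condition:
  fixes A :: "real^'n^'n"
  assumes lm: "local_min_on (quartic_obj A \<beta>) (sphere 0 1) y"
    and hi: "\<And>w. w \<bullet> (A *v w) \<le> M * (w \<bullet> w)" and ij: "i \<noteq> j"
  shows "(quartic_multiplier A \<beta> y - M) * ((y$i)^2 + (y$j)^2) \<le> 12 * \<beta> * (y$i)^2 * (y$j)^2"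
proof -
  \<comment> \<open>infinitesimal rotation in the \<open>(i, j)\<close> coordinate plane\<close>
  define v :: "real^'n" where "v = (\<chi> k. if k = i then y$j else if k = j then -(y$i) else 0)"
  have yv: "y \<bullet> v = 0"
    unfolding inner_vec_def by (subst sum_eq_two_support[OF ij]) (use ij in \<open>auto simp: v_def\<close>)
  have vv: "v \<bullet> v = (y$i)^2 + (y$j)^2"
    unfolding inner_vec_def by (subst sum_eq_two_support[OF ij]) (use ij in \<open>auto simp: v_def power2_eq_square\<close>)
  have "(\<Sum>k\<in>UNIV. (y$k)^2 * (v$k)^2) = 2 * ((y$i)^2 * (y$j)^2)"
    by (subst sum_eq_two_support[OF ij]) (use ij in \<open>auto simp: v_def\<close>)
  then have "quartic_multiplier A \<beta> y * (v \<bullet> v) \<le> v \<bullet> (A *v v) + 12 * \<beta> * (y$i)^2 * (y$j)^2"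
    using quartic_obj_tangent_conditions(2)[OF lm yv] by simp
  with hi[of v] show ?thesis unfolding vv by (simp add: algebra_simps)
qed

lemma quartic_obj_residual_bound:
  fixes A :: "real^'n^'n"
  assumes sym: "transpose A = A"
    and lo: "\<And>w. m * (w \<bullet> w) \<le> w \<bullet> (A *v w)" and hi: "\<And>w. w \<bullet> (A *v w) \<le> M * (w \<bullet> w)"
    and lm: "local_min_on (quartic_obj A \<beta>) (sphere 0 1) y"
  shows "(\<Sum>k\<in>UNIV. (y$k)^2 * (2 * \<beta> * (y$k)^2 - (quartic_multiplier A \<beta> y - m))^2) \<le> (M - m)^2"
proof -
  have "y \<bullet> y = 1" using lm by (auto simp: local_min_on_def dot_square_norm)
  have comp: "(A *v y - m *\<^sub>R y) $ k = - (y$k * (2 * \<beta> * (y$k)^2 - (quartic_multiplier A \<beta> y - m)))" for k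
    using quartic_obj_critical_point[OF sym lm] unfolding vec_eq_iff
    by (auto simp: algebra_simps power2_eq_square power3_eq_cube dest: spec[of _ k])
  then have "(A *v y - m *\<^sub>R y) \<bullet> (A *v y - m *\<^sub>R y)
      = (\<Sum>k\<in>UNIV. (y$k)^2 * (2 * \<beta> * (y$k)^2 - (quartic_multiplier A \<beta> y - m))^2)"
    unfolding inner_vec_def inner_real_def by (simp only: power_mult_distrib) (simp add: power2_eq_square mult_ac)
  with residual_le_quadratic_form_spread[OF sym lo hi, of y] \<open>y \<bullet> y = 1\<close> show ?thesis by simp
qed

lemma quartic_obj_ge_on_sphere:
  fixes A :: "real^'n^'n"
  assumes lo: "\<And>w. m * (w \<bullet> w) \<le> w \<bullet> (A *v w)" and "0 \<le> \<beta>" and "z \<in> sphere 0 1"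
  shows "m / 2 + \<beta> / (2 * real CARD('n)) \<le> quartic_obj A \<beta> z"
proof -
  have zz: "z \<bullet> z = 1" using assms(3) by (simp add: dot_square_norm)
  have "\<beta> * (1 / CARD('n)) \<le> \<beta> * (\<Sum>k\<in>UNIV. (z$k)^4)"
    using inverse_card_le_sum_power4[OF zz] \<open>0 \<le> \<beta>\<close> by (rule mult_left_mono)
  with lo[of z] zz show ?thesis unfolding quartic_obj_def by simp
qed

lemma local_min_coordinates_ge:
  fixes A :: "real^'n^'n"
  assumes lo: "\<And>w. m * (w \<bullet> w) \<le> w \<bullet> (A *v w)" and hi: "\<And>w. w \<bullet> (A *v w) \<le> M * (w \<bullet> w)"
    and "0 < \<beta>" and spread: "2 * real CARD('n) * (M - m) \<le> \<beta>"
    and lm: "local_min_on (quartic_obj A \<beta>) (sphere 0 1) y"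
  shows "1 / (8 * real CARD('n)) \<le> (y$k)^2"
proof -
  define n where "n = real CARD('n)"
  define a where "a k = (y$k)^2" for k
  have "1 \<le> n" by (simp add: n_def Suc_leI)
  have yy: "y \<bullet> y = 1" using lm by (auto simp: local_min_on_def dot_square_norm)
  then have sum_a: "sum a UNIV = 1" by (simp add: a_def inner_vec_def power2_eq_square)
  have lam_ge: "3 * \<beta> / (2 * n) \<le> quartic_multiplier A \<beta> y - M"
  proof -
    have "2 * \<beta> * (1 / n) \<le> 2 * \<beta> * (\<Sum>k\<in>UNIV. (y$k)^4)"
      using inverse_card_le_sum_power4[OF yy] \<open>0 < \<beta>\<close> by (intro mult_left_mono) (simp_all add: n_def)
    moreover have "\<beta> / (2 * n) + 3 * \<beta> / (2 * n) = 2 * \<beta> * (1 / n)" using \<open>1 \<le> n\<close> by (simp add: field_simps)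
    moreover have "M - m \<le> \<beta> / (2 * n)" using spread \<open>1 \<le> n\<close> by (simp add: n_def field_simps)
    ultimately show ?thesis using lo[of y] yy by (simp add: quartic_multiplier_def)
  qed
  have pair: "3 * \<beta> / (2 * n) * (a i + a j) \<le> 12 * \<beta> * a i * a j" if "i \<noteq> j" for i j
  proof -
    have "3 * \<beta> / (2 * n) * (a i + a j) \<le> (quartic_multiplier A \<beta> y - M) * (a i + a j)"
      using lam_ge by (rule mult_right_mono) (simp add: a_def)
    also have "\<dots> \<le> 12 * \<beta> * a i * a j"
      using quartic_obj_pair_condition[OF lm hi that] by (simp add: a_def)
    finally show ?thesis .
  qed
  have "0 \<le> 3 * \<beta> / (2 * n)" and "3 * \<beta> / (2 * n) \<le> 12 * \<beta> / real CARD('n)"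
    using \<open>0 < \<beta>\<close> \<open>1 \<le> n\<close> by (simp_all add: n_def field_simps)
  from lower_bound_from_pair_condition[of a, OF _ sum_a this pair]
  have "3 * \<beta> / (2 * n) \<le> 12 * \<beta> * a k" by (simp add: a_def)
  then show ?thesis using \<open>0 < \<beta>\<close> \<open>1 \<le> n\<close> by (simp add: a_def n_def field_simps)
qed

lemma local_min_sum_power4_excess:
  fixes A :: "real^'n^'n"
  assumes sym: "transpose A = A"
    and lo: "\<And>w. m * (w \<bullet> w) \<le> w \<bullet> (A *v w)" and hi: "\<And>w. w \<bullet> (A *v w) \<le> M * (w \<bullet> w)"
    and "0 < \<beta>" and spread: "2 * real CARD('n) * (M - m) \<le> \<beta>"
    and lm: "local_min_on (quartic_obj A \<beta>) (sphere 0 1) y"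
  shows "\<beta>^2 / (2 * real CARD('n)) * ((\<Sum>k\<in>UNIV. (y$k)^4) - 1 / real CARD('n)) \<le> (M - m)^2"
proof -
  define a where "a k = (y$k)^2" for k
  have "y \<bullet> y = 1" using lm by (auto simp: local_min_on_def dot_square_norm)
  then have sum_a: "sum a UNIV = 1" by (simp add: a_def inner_vec_def power2_eq_square)
  have a_ge: "1 / (8 * real CARD('n)) \<le> a k" for k
    unfolding a_def by (rule local_min_coordinates_ge[OF lo hi \<open>0 < \<beta>\<close> spread lm])
  have "\<beta>^2 / (2 * real CARD('n)) = 1 / (8 * real CARD('n)) * (2 * \<beta>)^2"
    by (simp add: power2_eq_square)
  also have "\<dots> * ((\<Sum>k\<in>UNIV. (y$k)^4) - 1 / real CARD('n))
      \<le> (\<Sum>k\<in>UNIV. a k * (2 * \<beta> * a k - (quartic_multiplier A \<beta> y - m))^2)"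
    using weighted_sq_deviation_ge[OF sum_a _ a_ge, where b = "2 * \<beta>" and \<mu> = "quartic_multiplier A \<beta> y - m"]
    by (simp add: a_def flip: power_mult)
  also have "\<dots> \<le> (M - m)^2"
    using quartic_obj_residual_bound[OF sym lo hi lm] unfolding a_def .
  finally show ?thesis .
qed

lemma local_min_quartic_obj_le:
  fixes A :: "real^'n^'n"
  assumes sym: "transpose A = A"
    and lo: "\<And>w. m * (w \<bullet> w) \<le> w \<bullet> (A *v w)" and hi: "\<And>w. w \<bullet> (A *v w) \<le> M * (w \<bullet> w)"
    and "0 < \<beta>" and spread: "18 * real CARD('n) ^ 3 * (M - m) \<le> \<beta> * (real CARD('n) - 1)"
    and lm: "local_min_on (quartic_obj A \<beta>) (sphere 0 1) y"
  shows "quartic_obj A \<beta> y \<le> m / 2 + \<beta> / (2 * real CARD('n)) + \<beta> / (36 * real CARD('n) ^ 2)"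
proof -
  define n where "n = real CARD('n)"
  have "1 \<le> n" by (simp add: n_def Suc_leI)
  have "y \<bullet> y = 1" using lm by (auto simp: local_min_on_def dot_square_norm)
  then have "m \<le> y \<bullet> (A *v y)" "y \<bullet> (A *v y) \<le> M" using lo[of y] hi[of y] by simp_all
  then have "0 \<le> M - m" by simp
  note spread' = spread_condition_consequences[OF \<open>1 \<le> n\<close> this \<open>0 < \<beta>\<close> spread[folded n_def]]
  have "quartic_obj A \<beta> y = y \<bullet> (A *v y) / 2 + \<beta> / (2 * n)
      + n / \<beta> * (\<beta>^2 / (2 * n) * ((\<Sum>k\<in>UNIV. (y$k)^4) - 1 / n))"
    using \<open>0 < \<beta>\<close> \<open>1 \<le> n\<close> unfolding quartic_obj_def by (simp add: field_simps power2_eq_square)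
  also have "\<dots> \<le> M / 2 + \<beta> / (2 * n) + n / \<beta> * (M - m)^2"
    using local_min_sum_power4_excess[OF sym lo hi \<open>0 < \<beta>\<close> spread'(1)[unfolded n_def] lm]
      \<open>y \<bullet> (A *v y) \<le> M\<close> \<open>0 < \<beta>\<close> \<open>1 \<le> n\<close>
    by (intro add_mono mult_left_mono) (simp_all add: n_def)
  also have "\<dots> = m / 2 + \<beta> / (2 * n) + ((M - m) / 2 + n * (M - m)^2 / \<beta>)"
    by (simp add: field_simps)
  also have "\<dots> \<le> m / 2 + \<beta> / (2 * n) + \<beta> / (36 * n^2)"
    using spread'(2) by simp
  finally show ?thesis unfolding n_def .
qed

theorem theorem13:
  fixes A :: "real^'n^'n" and \<beta> :: real and y :: "real^'n"
  assumes "CARD('n) \<ge> 2"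
    and "sym_posdef A"
    and "\<beta> > 18 * real (CARD('n)) ^ 3 / (real (CARD('n)) - 1) * (lambda_max A - lambda_min A)"
    and "local_min_on (quartic_obj A \<beta>) (sphere 0 1) y"
  shows "quartic_obj A \<beta> y - (INF z\<in>sphere 0 1. quartic_obj A \<beta> z)
           \<le> 1 / (18 * real (CARD('n))) * (INF z\<in>sphere 0 1. quartic_obj A \<beta> z)"
proof -
  define n where "n = real CARD('n)"
  have sym: "transpose A = A" using assms(2) by (simp add: sym_posdef_def)
  obtain m M where m: "m \<in> eigenvalues_of A" and M: "M \<in> eigenvalues_of A"
    and lo: "\<And>w. m * (w \<bullet> w) \<le> w \<bullet> (A *v w)" and hi: "\<And>w. w \<bullet> (A *v w) \<le> M * (w \<bullet> w)"
    using symmetric_quadratic_form_eigenvalue_bounds[OF sym] by blast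
  have "0 < m" using sym_posdef_eigenvalue_pos[OF assms(2) m] .
  have "lambda_min A \<le> m" "M \<le> lambda_max A"
    using Min_le Max_ge finite_eigenvalues_of_symmetric[OF sym] m M
    unfolding lambda_max_def lambda_min_def by blast+
  moreover have "m \<le> M" using lo[of "axis undefined 1"] hi[of "axis undefined 1"] by simp
  ultimately have "0 < \<beta>" "18 * n^3 * (M - m) \<le> \<beta> * (n - 1)"
    using beta_bound_imp_spread_condition[of n "M - m" "lambda_max A - lambda_min A" \<beta>] assms(1,3)
    unfolding n_def by simp_all
  then have "quartic_obj A \<beta> y \<le> m / 2 + \<beta> / (2 * n) + \<beta> / (36 * n^2)"
    using local_min_quartic_obj_le[OF sym lo hi _ _ assms(4)] unfolding n_def by simp
  moreover have "m / 2 + \<beta> / (2 * n) \<le> (INF z\<in>sphere 0 1. quartic_obj A \<beta> z)"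
    using quartic_obj_ge_on_sphere[OF lo] assms(4) \<open>0 < \<beta>\<close>
    by (intro cINF_greatest) (auto simp: local_min_on_def n_def)
  moreover have "\<beta> / (36 * n^2) \<le> (m / 2 + \<beta> / (2 * n)) / (18 * n)"
    using \<open>0 < m\<close> assms(1) by (simp add: n_def field_simps power2_eq_square)
  moreover have "(m / 2 + \<beta> / (2 * n)) / (18 * n) \<le> (INF z\<in>sphere 0 1. quartic_obj A \<beta> z) / (18 * n)"
    using calculation(2) by (rule divide_right_mono) (simp add: n_def)
  ultimately show ?thesis unfolding n_def by simp
qed

end
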